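(* Let $\kappa$ be an algebraically closed field of characteristic zero, complete for a non-trivial non-Archimedean absolute value. Let $a,b\in\kappa$ with $a\ne0$ and $|a|\le1$, let $L(z)=az+b$, let $f\in\mathcal{A}(\kappa)$ be an entire function not identically zero, and let $m$ be a positive integer. Then for every $r>|b|/|a|$, $$m\!\left(r,\frac{f\circ L}{f}\right)=0,\qquad m\!\left(r,\frac{\Delta_L^mf}{f}\right)=0.$$
   Context: $\mathcal{A}(\kappa)$ is the ring of entire functions over $\kappa$ (power series converging on all of $\kappa$). For entire $g=\sum a_nz^n$, $\mu(r,g)=\max_n|a_n|r^n$; for $g/h$, $\mu(r,g/h)=\mu(r,g)/\mu(r,h)$; $m(r,F)=\log^+\mu(r,F)=\max\{0,\log\mu(r,F)\}$. $\Delta_Lf=f\circ L-f$ and $\Delta_L^mf=\Delta_L(\Delta_L^{m-1}f)$. *)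

theory Defs
  imports Complex_Main "HOL-Computational_Algebra.Polynomial"
begin

definition v_tendsto :: "('a::field \<Rightarrow> real) \<Rightarrow> (nat \<Rightarrow> 'a) \<Rightarrow> 'a \<Rightarrow> bool" where
  "v_tendsto absv x l \<longleftrightarrow> (\<forall>\<epsilon>>0. \<exists>N. \<forall>n\<ge>N. absv (x n - l) < \<epsilon>)"

definition v_cauchy :: "('a::field \<Rightarrow> real) \<Rightarrow> (nat \<Rightarrow> 'a) \<Rightarrow> bool" where
  "v_cauchy absv x \<longleftrightarrow> (\<forall>\<epsilon>>0. \<exists>N. \<forall>m\<ge>N. \<forall>n\<ge>N. absv (x m - x n) < \<epsilon>)"

definition nonarch_abs :: "('a::field \<Rightarrow> real) \<Rightarrow> bool" where
  "nonarch_abs absv \<longleftrightarrow>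
     (\<forall>x. absv x \<ge> 0) \<and> (\<forall>x. absv x = 0 \<longleftrightarrow> x = 0) \<and>
     (\<forall>x y. absv (x * y) = absv x * absv y) \<and>
     (\<forall>x y. absv (x + y) \<le> max (absv x) (absv y))"

definition ac_complete_nonarch_field :: "('a::field_char_0 \<Rightarrow> real) \<Rightarrow> bool" where
  "ac_complete_nonarch_field absv \<longleftrightarrow>
     nonarch_abs absv \<and>
     (\<exists>x. absv x \<noteq> 0 \<and> absv x \<noteq> 1) \<and>
     (\<forall>x. v_cauchy absv x \<longrightarrow> (\<exists>l. v_tendsto absv x l)) \<and>
     (\<forall>p::'a poly. degree p > 0 \<longrightarrow> (\<exists>z. poly p z = 0))"

definition entire_coeffs :: "('a::field \<Rightarrow> real) \<Rightarrow> (nat \<Rightarrow> 'a) \<Rightarrow> ('a \<Rightarrow> 'a) \<Rightarrow> bool" where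
  "entire_coeffs absv c g \<longleftrightarrow>
     (\<forall>r>0. (\<lambda>n. absv (c n) * r ^ n) \<longlonglongrightarrow> 0) \<and>
     (\<forall>z. v_tendsto absv (\<lambda>n. \<Sum>k<n. c k * z ^ k) (g z))"

definition is_entire :: "('a::field \<Rightarrow> real) \<Rightarrow> ('a \<Rightarrow> 'a) \<Rightarrow> bool" where
  "is_entire absv g \<longleftrightarrow> (\<exists>c. entire_coeffs absv c g)"

definition mu :: "('a::field \<Rightarrow> real) \<Rightarrow> ('a \<Rightarrow> 'a) \<Rightarrow> real \<Rightarrow> real" where
  "mu absv g r = (let c = (THE c. entire_coeffs absv c g) in
                  Sup (range (\<lambda>n. absv (c n) * r ^ n)))"

definition m_quot :: "('a::field \<Rightarrow> real) \<Rightarrow> real \<Rightarrow> ('a \<Rightarrow> 'a) \<Rightarrow> ('a \<Rightarrow> 'a) \<Rightarrow> real" where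
  "m_quot absv r g h = max 0 (ln (mu absv g r / mu absv h r))"

definition Delta :: "('a \<Rightarrow> 'a) \<Rightarrow> ('a::ab_group_add \<Rightarrow> 'a) \<Rightarrow> 'a \<Rightarrow> 'a" where
  "Delta L f = (\<lambda>z. f (L z) - f z)"

definition Delta_pow :: "('a \<Rightarrow> 'a) \<Rightarrow> nat \<Rightarrow> ('a::ab_group_add \<Rightarrow> 'a) \<Rightarrow> 'a \<Rightarrow> 'a" where
  "Delta_pow L m f = (Delta L ^^ m) f"

end

theory Submission
  imports Defs
begin

text \<open>
  Write \<open>L z = a z + b\<close> and \<open>f = \<Sum> c\<^sub>n z\<^sup>n\<close>. Expanding \<open>(a z + b)\<^sup>n\<close> binomially, the \<open>k\<close>-th
  coefficient of \<open>f \<circ> L\<close> is the convergent series \<open>\<Sum>\<^sub>n c\<^sub>n (n choose k) a\<^sup>k b\<^sup>n\<^sup>-\<^sup>k\<close>. Binomial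
  coefficients have absolute value at most 1, so by the ultrametric inequality every term satisfies
  \<open>|c\<^sub>n (n choose k) a\<^sup>k b\<^sup>n\<^sup>-\<^sup>k| r\<^sup>k \<le> |c\<^sub>n| max (|a| r) |b| ^ n \<le> |c\<^sub>n| r\<^sup>n\<close> once \<open>|a| \<le> 1\<close> and
  \<open>|b| \<le> r\<close> (which follows from \<open>r > |b| / |a|\<close>). Hence every coefficient of \<open>f \<circ> L\<close> is bounded by
  the maximum term \<open>\<mu>(r, f)\<close>, and so are the coefficients of \<open>\<Delta>\<^sub>L f = f \<circ> L - f\<close> and, inductively,
  of \<open>\<Delta>\<^sub>L\<^sup>m f\<close>. The quotients of maximum terms are therefore at most 1, and their \<open>log\<^sup>+\<close> vanishes.
  That \<open>\<mu>\<close> is well defined rests on the identity theorem for power series, which needs points of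
  arbitrarily small nonzero absolute value, i.e. a non-trivial absolute value.
\<close>

section \<open>Non-Archimedean absolute values\<close>

locale nonarch =
  fixes absv :: "'a::field \<Rightarrow> real"
  assumes nonarch_abs: "nonarch_abs absv"
begin

lemma absv_nonneg [simp]: "0 \<le> absv x"
  using nonarch_abs by (simp add: nonarch_abs_def)

lemma absv_eq_0_iff [simp]: "absv x = 0 \<longleftrightarrow> x = 0"
  using nonarch_abs by (simp add: nonarch_abs_def)

lemma absv_zero [simp]: "absv 0 = 0"
  by simp

lemma absv_pos_iff [simp]: "0 < absv x \<longleftrightarrow> x \<noteq> 0"
  using absv_nonneg[of x] absv_eq_0_iff[of x] by linarith

lemma absv_mult: "absv (x * y) = absv x * absv y"
  using nonarch_abs by (simp add: nonarch_abs_def)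

lemma absv_add_le_max: "absv (x + y) \<le> max (absv x) (absv y)"
  using nonarch_abs by (simp add: nonarch_abs_def)

lemma absv_one [simp]: "absv 1 = 1"
  using absv_mult[of 1 1] absv_eq_0_iff[of 1] by simp

lemma absv_minus [simp]: "absv (- x) = absv x"
proof -
  have "absv (- 1) * absv (- 1) = 1"
    using absv_mult[of "- 1" "- 1"] by simp
  then have "absv (- 1) = 1"
    using absv_nonneg[of "- 1"] by (metis abs_of_nonneg mult_cancel_right2 real_sqrt_abs2 real_sqrt_one zero_neq_one)
  then show ?thesis
    using absv_mult[of "- 1" x] by simp
qed

lemma absv_diff_le_max: "absv (x - y) \<le> max (absv x) (absv y)"
  using absv_add_le_max[of x "- y"] by simp

lemma absv_diff_commute: "absv (x - y) = absv (y - x)"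
  by (metis absv_minus minus_diff_eq)

lemma absv_power: "absv (x ^ n) = absv x ^ n"
  by (induction n) (simp_all add: absv_mult)

lemma absv_of_nat_le_1: "absv (of_nat n) \<le> 1"
proof (induction n)
  case (Suc n)
  have "absv (of_nat n + 1) \<le> max (absv (of_nat n)) (absv 1)"
    by (rule absv_add_le_max)
  with Suc show ?case
    by (simp add: add.commute)
qed simp

lemma absv_sum_le:
  assumes "0 \<le> B" "\<And>i. i \<in> S \<Longrightarrow> absv (f i) \<le> B"
  shows "absv (sum f S) \<le> B"
  using assms
proof (induction S rule: infinite_finite_induct)
  case (insert x F)
  have "absv (f x + sum f F) \<le> max (absv (f x)) (absv (sum f F))"
    by (rule absv_add_le_max)
  moreover have "absv (f x) \<le> B" "absv (sum f F) \<le> B"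
    using insert by auto
  ultimately show ?case
    using insert(1,2) by simp
qed simp_all

lemma v_tendsto_const: "v_tendsto absv (\<lambda>_. l) l"
  by (simp add: v_tendsto_def)

lemma v_tendsto_cmult:
  assumes "v_tendsto absv x l"
  shows "v_tendsto absv (\<lambda>n. c * x n) (c * l)"
  unfolding v_tendsto_def
proof (intro allI impI)
  fix \<epsilon> :: real
  assume "0 < \<epsilon>"
  show "\<exists>N. \<forall>n\<ge>N. absv (c * x n - c * l) < \<epsilon>"
  proof (cases "c = 0")
    case False
    then obtain N where N: "\<forall>n\<ge>N. absv (x n - l) < \<epsilon> / absv c"
      using assms \<open>0 < \<epsilon>\<close> unfolding v_tendsto_def by (meson absv_pos_iff divide_pos_pos)
    have "absv (c * x n - c * l) < \<epsilon>" if "N \<le> n" for n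
    proof -
      have "absv (c * x n - c * l) = absv c * absv (x n - l)"
        by (simp flip: absv_mult add: right_diff_distrib)
      also have "\<dots> < \<epsilon>"
        using N that False by (simp add: pos_less_divide_eq mult.commute)
      finally show ?thesis .
    qed
    then show ?thesis
      by blast
  qed (use \<open>0 < \<epsilon>\<close> in simp)
qed

lemma v_tendsto_diff:
  assumes "v_tendsto absv x l" "v_tendsto absv y l'"
  shows "v_tendsto absv (\<lambda>n. x n - y n) (l - l')"
  unfolding v_tendsto_def
proof (intro allI impI)
  fix \<epsilon> :: real
  assume "0 < \<epsilon>"
  then obtain N1 N2 where N1: "\<forall>n\<ge>N1. absv (x n - l) < \<epsilon>" and N2: "\<forall>n\<ge>N2. absv (y n - l') < \<epsilon>"
    using assms unfolding v_tendsto_def by meson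
  have "absv (x n - y n - (l - l')) < \<epsilon>" if "max N1 N2 \<le> n" for n
  proof -
    have "absv ((x n - l) - (y n - l')) \<le> max (absv (x n - l)) (absv (y n - l'))"
      by (rule absv_diff_le_max)
    moreover have "(x n - l) - (y n - l') = x n - y n - (l - l')"
      by simp
    ultimately show ?thesis
      using N1 N2 that by fastforce
  qed
  then show "\<exists>N. \<forall>n\<ge>N. absv (x n - y n - (l - l')) < \<epsilon>"
    by blast
qed

lemma v_tendsto_eventually_close:
  assumes "\<And>\<epsilon>. 0 < \<epsilon> \<Longrightarrow> \<exists>N. \<forall>n\<ge>N. absv (x n - y n) \<le> \<epsilon>"
    and "v_tendsto absv y l"
  shows "v_tendsto absv x l"
  unfolding v_tendsto_def
proof (intro allI impI)
  fix \<epsilon> :: real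
  assume "0 < \<epsilon>"
  then obtain N1 N2 where N1: "\<forall>n\<ge>N1. absv (x n - y n) \<le> \<epsilon> / 2" and N2: "\<forall>n\<ge>N2. absv (y n - l) < \<epsilon>"
    using assms half_gt_zero unfolding v_tendsto_def by meson
  have "absv (x n - l) < \<epsilon>" if "max N1 N2 \<le> n" for n
  proof -
    have "absv ((x n - y n) + (y n - l)) \<le> max (absv (x n - y n)) (absv (y n - l))"
      by (rule absv_add_le_max)
    with N1 N2 that \<open>0 < \<epsilon>\<close> show ?thesis
      by fastforce
  qed
  then show "\<exists>N. \<forall>n\<ge>N. absv (x n - l) < \<epsilon>"
    by blast
qed

lemma v_tendsto_absv_le:
  assumes "v_tendsto absv x l" "\<And>n. N \<le> n \<Longrightarrow> absv (x n) \<le> B"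
  shows "absv l \<le> B"
proof (rule ccontr)
  assume "\<not> absv l \<le> B"
  moreover have "0 \<le> B"
    using assms(2)[of N] absv_nonneg[of "x N"] by linarith
  ultimately obtain M where M: "\<forall>n\<ge>M. absv (x n - l) < absv l"
    using assms(1) unfolding v_tendsto_def by force
  define n where "n = max N M"
  have "absv (x n - (x n - l)) \<le> max (absv (x n)) (absv (x n - l))"
    by (rule absv_diff_le_max)
  moreover have "absv (x n) \<le> B" "absv (x n - l) < absv l"
    using assms(2) M by (simp_all add: n_def)
  ultimately show False
    using \<open>\<not> absv l \<le> B\<close> by simp
qed

lemma absv_series_tail_le:
  assumes "v_tendsto absv (\<lambda>M. \<Sum>n<M. t n) l" "0 \<le> B" "\<And>n. N \<le> n \<Longrightarrow> absv (t n) \<le> B"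
  shows "absv (l - (\<Sum>n<N. t n)) \<le> B"
proof (rule v_tendsto_absv_le[OF v_tendsto_diff[OF assms(1) v_tendsto_const]])
  fix M
  assume "N \<le> M"
  then have "(\<Sum>n<M. t n) - (\<Sum>n<N. t n) = (\<Sum>n\<in>{N..<M}. t n)"
    by (simp add: lessThan_atLeast0 sum_diff_nat_ivl)
  also have "absv \<dots> \<le> B"
    using assms(2,3) by (intro absv_sum_le) auto
  finally show "absv ((\<Sum>n<M. t n) - (\<Sum>n<N. t n)) \<le> B" .
qed

lemma absv_series_le:
  assumes "v_tendsto absv (\<lambda>M. \<Sum>n<M. t n) l" "0 \<le> B" "\<And>n. absv (t n) \<le> B"
  shows "absv l \<le> B"
  using absv_series_tail_le[OF assms, of 0] by simp

section \<open>Coefficient sequences of entire functions\<close>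

lemma entire_coeffs_tendsto_0:
  assumes "entire_coeffs absv c g" "0 \<le> R"
  shows "(\<lambda>n. absv (c n) * R ^ n) \<longlonglongrightarrow> 0"
proof (cases "R = 0")
  case True
  then have "(\<lambda>n. absv (c (Suc n)) * R ^ Suc n) \<longlonglongrightarrow> 0"
    by simp
  then show ?thesis
    by (rule LIMSEQ_imp_Suc)
qed (use assms in \<open>simp add: entire_coeffs_def\<close>)

lemma entire_coeffs_nonzero:
  assumes "entire_coeffs absv c g" "g \<noteq> (\<lambda>_. 0)"
  shows "\<exists>n. c n \<noteq> 0"
proof (rule ccontr)
  assume "\<not> (\<exists>n. c n \<noteq> 0)"
  have "absv (g z) \<le> 0" for z
  proof (rule absv_series_le)
    show "v_tendsto absv (\<lambda>N. \<Sum>n<N. c n * z ^ n) (g z)"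
      using assms(1) by (simp add: entire_coeffs_def)
  qed (use \<open>\<not> (\<exists>n. c n \<noteq> 0)\<close> in simp_all)
  then have "g = (\<lambda>_. 0)"
    by (simp add: fun_eq_iff order_antisym_conv)
  with assms(2) show False ..
qed

lemma entire_coeffs_diff:
  assumes "entire_coeffs absv c g" "entire_coeffs absv d h"
  shows "entire_coeffs absv (\<lambda>k. c k - d k) (\<lambda>z. g z - h z)"
  unfolding entire_coeffs_def
proof (intro conjI allI impI)
  fix \<rho> :: real
  assume "0 < \<rho>"
  have "(\<lambda>k. absv (c k) * \<rho> ^ k) \<longlonglongrightarrow> 0" "(\<lambda>k. absv (d k) * \<rho> ^ k) \<longlonglongrightarrow> 0"
    using assms \<open>0 < \<rho>\<close> by (simp_all add: entire_coeffs_def)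
  then have max_tendsto: "(\<lambda>k. max (absv (c k) * \<rho> ^ k) (absv (d k) * \<rho> ^ k)) \<longlonglongrightarrow> 0"
    using tendsto_max by fastforce
  have bound: "absv (c k - d k) * \<rho> ^ k \<le> max (absv (c k) * \<rho> ^ k) (absv (d k) * \<rho> ^ k)" for k
  proof -
    have "absv (c k - d k) * \<rho> ^ k \<le> max (absv (c k)) (absv (d k)) * \<rho> ^ k"
      using \<open>0 < \<rho>\<close> by (intro mult_right_mono absv_diff_le_max) simp
    then show ?thesis
      using \<open>0 < \<rho>\<close> by (simp only: max_mult_distrib_right zero_le_power less_imp_le if_True)
  qed
  show "(\<lambda>k. absv (c k - d k) * \<rho> ^ k) \<longlonglongrightarrow> 0"
    by (rule tendsto_sandwich[OF _ _ tendsto_const max_tendsto]) (use \<open>0 < \<rho>\<close> bound in simp_all)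
next
  fix z
  have "v_tendsto absv (\<lambda>N. \<Sum>k<N. c k * z ^ k) (g z)" "v_tendsto absv (\<lambda>N. \<Sum>k<N. d k * z ^ k) (h z)"
    using assms by (simp_all add: entire_coeffs_def)
  then have "v_tendsto absv (\<lambda>N. (\<Sum>k<N. c k * z ^ k) - (\<Sum>k<N. d k * z ^ k)) (g z - h z)"
    by (rule v_tendsto_diff)
  then show "v_tendsto absv (\<lambda>N. \<Sum>k<N. (c k - d k) * z ^ k) (g z - h z)"
    by (simp add: sum_subtractf left_diff_distrib)
qed

lemma entire_coeffs_Delta:
  assumes "entire_coeffs absv c g" "entire_coeffs absv d (g \<circ> L)"
  shows "entire_coeffs absv (\<lambda>k. d k - c k) (Delta L g)"
  using entire_coeffs_diff[OF assms(2,1)] by (simp add: Delta_def comp_def)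

end

section \<open>Substituting an affine map\<close>

text \<open>The contribution of \<open>c\<^sub>n (a z + b)\<^sup>n\<close> to the coefficient of \<open>z\<^sup>k\<close>.\<close>

definition affine_coeff_term :: "'a::field \<Rightarrow> 'a \<Rightarrow> (nat \<Rightarrow> 'a) \<Rightarrow> nat \<Rightarrow> nat \<Rightarrow> 'a" where
  "affine_coeff_term a b c k n = c n * of_nat (n choose k) * a ^ k * b ^ (n - k)"

lemma affine_coeff_term_eq_0: "n < k \<Longrightarrow> affine_coeff_term a b c k n = 0"
  by (simp add: affine_coeff_term_def binomial_eq_0)

lemma power_series_affine_expand:
  "(\<Sum>n<N. c n * (a * z + b) ^ n) = (\<Sum>k<N. z ^ k * (\<Sum>n<N. affine_coeff_term a b c k n))"
proof -
  have "c n * (a * z + b) ^ n = (\<Sum>k<N. z ^ k * affine_coeff_term a b c k n)" if "n < N" for n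
  proof -
    have "c n * (a * z + b) ^ n = (\<Sum>k\<le>n. z ^ k * affine_coeff_term a b c k n)"
      by (simp add: binomial_ring sum_distrib_left affine_coeff_term_def power_mult_distrib mult_ac)
    also have "\<dots> = (\<Sum>k<N. z ^ k * affine_coeff_term a b c k n)"
      using that by (intro sum.mono_neutral_left) (auto simp: affine_coeff_term_eq_0)
    finally show ?thesis .
  qed
  then have "(\<Sum>n<N. c n * (a * z + b) ^ n) = (\<Sum>n<N. \<Sum>k<N. z ^ k * affine_coeff_term a b c k n)"
    by simp
  also have "\<dots> = (\<Sum>k<N. z ^ k * (\<Sum>n<N. affine_coeff_term a b c k n))"
    by (subst sum.swap) (simp add: sum_distrib_left)
  finally show ?thesis .
qed

context nonarch
begin

lemma absv_affine_coeff_term_le: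
  assumes "0 \<le> \<rho>"
  shows "absv (affine_coeff_term a b c k n) * \<rho> ^ k \<le> absv (c n) * max (absv a * \<rho>) (absv b) ^ n"
proof (cases "k \<le> n")
  case True
  let ?R = "max (absv a * \<rho>) (absv b)"
  have "0 \<le> ?R"
    by (simp add: max.coboundedI2)
  have "absv (affine_coeff_term a b c k n) * \<rho> ^ k
      = absv (c n) * absv (of_nat (n choose k)) * ((absv a * \<rho>) ^ k * absv b ^ (n - k))"
    by (simp add: affine_coeff_term_def absv_mult absv_power power_mult_distrib mult_ac)
  also have "\<dots> \<le> absv (c n) * 1 * (?R ^ k * ?R ^ (n - k))"
    using assms \<open>0 \<le> ?R\<close> by (intro mult_mono absv_of_nat_le_1 power_mono) auto
  also have "\<dots> = absv (c n) * ?R ^ n"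
    using True by (simp flip: power_add)
  finally show ?thesis .
qed (simp add: affine_coeff_term_eq_0 max.coboundedI2)

lemma absv_affine_coeff_le:
  assumes "v_tendsto absv (\<lambda>N. \<Sum>n<N. affine_coeff_term a b c k n) d" "0 < \<rho>" "0 \<le> B"
    and "\<And>n. k \<le> n \<Longrightarrow> absv (c n) * max (absv a * \<rho>) (absv b) ^ n \<le> B"
  shows "absv d * \<rho> ^ k \<le> B"
proof -
  have "absv d \<le> B / \<rho> ^ k"
  proof (rule absv_series_le[OF assms(1)])
    fix n
    show "absv (affine_coeff_term a b c k n) \<le> B / \<rho> ^ k"
    proof (cases "k \<le> n")
      case True
      then have "absv (affine_coeff_term a b c k n) * \<rho> ^ k \<le> B"
        using absv_affine_coeff_term_le[of \<rho> a b c k n] assms(2,4) by fastforce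
      then show ?thesis
        using assms(2) by (simp add: pos_le_divide_eq)
    qed (use assms(2,3) in \<open>simp add: affine_coeff_term_eq_0\<close>)
  qed (use assms(2,3) in simp)
  then show ?thesis
    using assms(2) by (simp add: pos_le_divide_eq)
qed

lemma affine_coeffs_tendsto_0:
  assumes "entire_coeffs absv c g"
    and "\<And>k. v_tendsto absv (\<lambda>N. \<Sum>n<N. affine_coeff_term a b c k n) (d k)" and "0 < \<rho>"
  shows "(\<lambda>k. absv (d k) * \<rho> ^ k) \<longlonglongrightarrow> 0"
proof (rule LIMSEQ_I)
  fix \<epsilon> :: real
  assume "0 < \<epsilon>"
  let ?R = "max (absv a * \<rho>) (absv b)"
  have "(\<lambda>n. absv (c n) * ?R ^ n) \<longlonglongrightarrow> 0"
    using assms(1) by (rule entire_coeffs_tendsto_0) (simp add: le_max_iff_disj)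
  then obtain N where N: "\<And>n. N \<le> n \<Longrightarrow> absv (c n) * ?R ^ n \<le> \<epsilon> / 2"
    using LIMSEQ_D[of _ 0 "\<epsilon> / 2"] \<open>0 < \<epsilon>\<close> by (fastforce intro: less_imp_le)
  have "absv (d k) * \<rho> ^ k \<le> \<epsilon> / 2" if "N \<le> k" for k
    using that \<open>0 < \<epsilon>\<close> by (intro absv_affine_coeff_le[OF assms(2,3)] N) auto
  then show "\<exists>N. \<forall>k\<ge>N. norm (absv (d k) * \<rho> ^ k - 0) < \<epsilon>"
    using \<open>0 < \<epsilon>\<close> assms(3) by (fastforce simp: abs_of_nonneg)
qed

lemma affine_coeffs_sums:
  assumes "entire_coeffs absv c g"
    and d: "\<And>k. v_tendsto absv (\<lambda>N. \<Sum>n<N. affine_coeff_term a b c k n) (d k)"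
  shows "v_tendsto absv (\<lambda>N. \<Sum>k<N. d k * z ^ k) (g (a * z + b))"
proof (rule v_tendsto_eventually_close)
  show "v_tendsto absv (\<lambda>N. \<Sum>n<N. c n * (a * z + b) ^ n) (g (a * z + b))"
    using assms(1) by (simp add: entire_coeffs_def)
next
  fix \<epsilon> :: real
  assume "0 < \<epsilon>"
  let ?R = "max (absv a * absv z) (absv b)"
  have "(\<lambda>n. absv (c n) * ?R ^ n) \<longlonglongrightarrow> 0"
    using assms(1) by (rule entire_coeffs_tendsto_0) (simp add: le_max_iff_disj)
  then obtain N0 where N0: "\<And>n. N0 \<le> n \<Longrightarrow> absv (c n) * ?R ^ n \<le> \<epsilon>"
    using LIMSEQ_D[of _ 0 \<epsilon>] \<open>0 < \<epsilon>\<close> by (fastforce intro: less_imp_le)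
  have "absv ((\<Sum>k<N. d k * z ^ k) - (\<Sum>n<N. c n * (a * z + b) ^ n)) \<le> \<epsilon>" if "N0 \<le> N" for N
  proof -
    have tail: "absv (z ^ k * d k - (\<Sum>n<N. z ^ k * affine_coeff_term a b c k n)) \<le> \<epsilon>" for k
    proof (rule absv_series_tail_le)
      show "v_tendsto absv (\<lambda>M. \<Sum>n<M. z ^ k * affine_coeff_term a b c k n) (z ^ k * d k)"
        using v_tendsto_cmult[OF d] by (simp add: sum_distrib_left)
      fix n
      assume "N \<le> n"
      have "absv (z ^ k * affine_coeff_term a b c k n) \<le> absv (c n) * ?R ^ n"
        using absv_affine_coeff_term_le[of "absv z"] by (simp add: absv_mult absv_power mult.commute)
      also have "\<dots> \<le> \<epsilon>"
        using N0 \<open>N \<le> n\<close> that by simp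
      finally show "absv (z ^ k * affine_coeff_term a b c k n) \<le> \<epsilon>" .
    qed (use \<open>0 < \<epsilon>\<close> in simp)
    have "(\<Sum>k<N. d k * z ^ k) - (\<Sum>n<N. c n * (a * z + b) ^ n)
        = (\<Sum>k<N. z ^ k * d k - (\<Sum>n<N. z ^ k * affine_coeff_term a b c k n))"
      by (simp add: power_series_affine_expand sum_subtractf sum_distrib_left mult.commute)
    also have "absv \<dots> \<le> \<epsilon>"
      using tail \<open>0 < \<epsilon>\<close> by (intro absv_sum_le) auto
    finally show ?thesis .
  qed
  then show "\<exists>N0. \<forall>N\<ge>N0. absv ((\<Sum>k<N. d k * z ^ k) - (\<Sum>n<N. c n * (a * z + b) ^ n)) \<le> \<epsilon>"
    by blast
qed

lemma entire_coeffs_comp_affine: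
  assumes "entire_coeffs absv c g"
    and "\<And>k. v_tendsto absv (\<lambda>N. \<Sum>n<N. affine_coeff_term a b c k n) (d k)"
  shows "entire_coeffs absv d (g \<circ> (\<lambda>z. a * z + b))"
  using affine_coeffs_tendsto_0[OF assms] affine_coeffs_sums[OF assms]
  by (simp add: entire_coeffs_def)

end

section \<open>Coefficient bounds\<close>

text \<open>
  \<open>coeff_bounded absv r B g\<close> says \<open>\<mu>(r, g) \<le> B\<close>; quantifying over coefficient sequences lets it be
  propagated without knowing that coefficients are unique.
\<close>

definition coeff_bounded :: "('a::field \<Rightarrow> real) \<Rightarrow> real \<Rightarrow> real \<Rightarrow> ('a \<Rightarrow> 'a) \<Rightarrow> bool" where
  "coeff_bounded absv r B g \<longleftrightarrow> (\<exists>c. entire_coeffs absv c g \<and> (\<forall>n. absv (c n) * r ^ n \<le> B))"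

lemma (in nonarch) coeff_bounded_Delta:
  assumes "0 \<le> r" "coeff_bounded absv r B g" "coeff_bounded absv r B (g \<circ> L)"
  shows "coeff_bounded absv r B (Delta L g)"
proof -
  obtain c d where c: "entire_coeffs absv c g" "\<And>n. absv (c n) * r ^ n \<le> B"
    and d: "entire_coeffs absv d (g \<circ> L)" "\<And>n. absv (d n) * r ^ n \<le> B"
    using assms(2,3) by (auto simp: coeff_bounded_def)
  have "absv (d n - c n) * r ^ n \<le> B" for n
  proof -
    have "absv (d n - c n) * r ^ n \<le> max (absv (d n)) (absv (c n)) * r ^ n"
      using assms(1) by (intro mult_right_mono absv_diff_le_max) simp
    also have "\<dots> \<le> B"
      using c(2)[of n] d(2)[of n] by (simp add: max_def)
    finally show ?thesis .
  qed
  then show ?thesis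
    using entire_coeffs_Delta[OF c(1) d(1)] by (auto simp: coeff_bounded_def)
qed

locale complete_nonarch = nonarch +
  assumes complete: "\<And>x. v_cauchy absv x \<Longrightarrow> \<exists>l. v_tendsto absv x l"
begin

lemma series_converges:
  assumes "(\<lambda>n. absv (t n)) \<longlonglongrightarrow> 0"
  shows "\<exists>l. v_tendsto absv (\<lambda>N. \<Sum>n<N. t n) l"
proof (rule complete)
  show "v_cauchy absv (\<lambda>N. \<Sum>n<N. t n)"
    unfolding v_cauchy_def
  proof (intro allI impI)
    fix \<epsilon> :: real
    assume "0 < \<epsilon>"
    then obtain N where N: "\<forall>n\<ge>N. absv (t n) < \<epsilon> / 2"
      using LIMSEQ_D[OF assms, of "\<epsilon> / 2"] by fastforce
    have close: "absv ((\<Sum>n<q. t n) - (\<Sum>n<p. t n)) < \<epsilon>" if "N \<le> p" "p \<le> q" for p q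
    proof -
      have "absv (\<Sum>n\<in>{p..<q}. t n) \<le> \<epsilon> / 2"
      proof (rule absv_sum_le)
        fix n assume "n \<in> {p..<q}"
        with N that show "absv (t n) \<le> \<epsilon> / 2"
          by (auto intro: less_imp_le)
      qed (use \<open>0 < \<epsilon>\<close> in simp)
      then show ?thesis
        using that \<open>0 < \<epsilon>\<close> by (simp add: lessThan_atLeast0 sum_diff_nat_ivl)
    qed
    show "\<exists>N. \<forall>m\<ge>N. \<forall>n\<ge>N. absv ((\<Sum>k<m. t k) - (\<Sum>k<n. t k)) < \<epsilon>"
      using close absv_diff_commute by (metis nle_le)
  qed
qed

lemma affine_coeff_series_converges:
  assumes "entire_coeffs absv c g"
  shows "\<exists>d. v_tendsto absv (\<lambda>N. \<Sum>n<N. affine_coeff_term a b c k n) d"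
proof (rule series_converges)
  let ?R = "max (absv a) (absv b)"
  have R: "(\<lambda>n. absv (c n) * ?R ^ n) \<longlonglongrightarrow> 0"
    using assms by (rule entire_coeffs_tendsto_0) (simp add: le_max_iff_disj)
  have "absv (affine_coeff_term a b c k n) \<le> absv (c n) * ?R ^ n" for n
    using absv_affine_coeff_term_le[of 1 a b c k n] by simp
  then show "(\<lambda>n. absv (affine_coeff_term a b c k n)) \<longlonglongrightarrow> 0"
    by (intro tendsto_sandwich[OF _ _ tendsto_const R]) simp_all
qed

lemma coeff_bounded_comp_affine:
  assumes "absv a \<le> 1" "0 < r" "absv b \<le> r" "coeff_bounded absv r B g"
  shows "coeff_bounded absv r B (g \<circ> (\<lambda>z. a * z + b))"
proof -
  obtain c where c: "entire_coeffs absv c g" "\<And>n. absv (c n) * r ^ n \<le> B"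
    using assms(4) by (auto simp: coeff_bounded_def)
  obtain d where d: "\<And>k. v_tendsto absv (\<lambda>N. \<Sum>n<N. affine_coeff_term a b c k n) (d k)"
    using affine_coeff_series_converges[OF c(1)] by metis
  have "max (absv a * r) (absv b) \<le> r"
    using assms(1-3) mult_left_le_one_le[of r "absv a"] by simp
  then have "absv (c n) * max (absv a * r) (absv b) ^ n \<le> B" for n
    using c(2)[of n] order_trans mult_left_mono power_mono absv_nonneg
    by (meson le_max_iff_disj)
  moreover have "0 \<le> B"
    using order_trans[OF _ c(2)[of 0]] by simp
  ultimately have "absv (d k) * r ^ k \<le> B" for k
    using assms(2) by (intro absv_affine_coeff_le[OF d]) auto
  then show ?thesis
    using entire_coeffs_comp_affine[OF c(1) d] by (auto simp: coeff_bounded_def)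
qed

lemma coeff_bounded_Delta_pow:
  assumes "absv a \<le> 1" "0 < r" "absv b \<le> r" "coeff_bounded absv r B g"
  shows "coeff_bounded absv r B (Delta_pow (\<lambda>z. a * z + b) m g)"
  unfolding Delta_pow_def
proof (induction m)
  case (Suc m)
  with assms show ?case
    by (simp add: coeff_bounded_Delta coeff_bounded_comp_affine)
qed (use assms in simp)

end

section \<open>Uniqueness of coefficients and the maximum term\<close>

locale nontrivial_nonarch = nonarch +
  assumes nontrivial: "\<exists>x. absv x \<noteq> 0 \<and> absv x \<noteq> 1"
begin

lemma exists_small_nonzero:
  assumes "0 < \<delta>"
  obtains z where "z \<noteq> 0" "absv z < \<delta>"
proof -
  obtain x where x: "x \<noteq> 0" "absv x \<noteq> 1"
    using nontrivial by auto
  obtain y where y: "y \<noteq> 0" "absv y < 1"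
  proof (cases "absv x < 1")
    case False
    have "absv x * absv (inverse x) = 1"
      using x(1) absv_mult[of x "inverse x"] by simp
    moreover have "1 < absv x"
      using False x(2) by simp
    ultimately have "absv (inverse x) = 1 / absv x"
      by (simp add: eq_divide_eq mult.commute)
    with \<open>1 < absv x\<close> have "absv (inverse x) < 1"
      by (simp add: divide_less_eq)
    with x(1) show ?thesis
      by (intro that[of "inverse x"]) simp_all
  qed (use x that in blast)
  obtain n where "absv y ^ n < \<delta>"
    using real_arch_pow_inv[OF assms y(2)] by blast
  with y(1) show ?thesis
    by (intro that[of "y ^ n"]) (simp_all add: absv_power)
qed

lemma entire_coeffs_zero_fun:
  assumes "entire_coeffs absv e (\<lambda>_. 0)"
  shows "e = (\<lambda>_. 0)"
proof (rule ccontr)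
  assume "e \<noteq> (\<lambda>_. 0)"
  then obtain k where k: "e k \<noteq> 0" "\<And>n. n < k \<Longrightarrow> e n = 0"
    using exists_least_iff[of "\<lambda>n. e n \<noteq> 0"] by (auto simp: fun_eq_iff)
  have "(\<lambda>n. absv (e n) * 1 ^ n) \<longlonglongrightarrow> 0"
    using assms zero_less_one unfolding entire_coeffs_def by blast
  then have "Bseq (\<lambda>n. absv (e n))"
    by (intro convergent_imp_Bseq convergentI) simp
  then obtain K where K: "0 < K" "\<And>n. absv (e n) \<le> K"
    unfolding Bseq_def by auto
  \<comment> \<open>close to 0 the lowest nonvanishing term dominates the tail of the series\<close>
  obtain z where z: "z \<noteq> 0" "absv z < min 1 (absv (e k) / K)"
    using exists_small_nonzero[of "min 1 (absv (e k) / K)"] K(1) k(1) by auto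
  have "absv (0 - (\<Sum>n<Suc k. e n * z ^ n)) \<le> K * absv z ^ Suc k"
  proof (rule absv_series_tail_le)
    show "v_tendsto absv (\<lambda>N. \<Sum>n<N. e n * z ^ n) 0"
      using assms by (simp add: entire_coeffs_def)
    fix n
    assume "Suc k \<le> n"
    then have "absv z ^ n \<le> absv z ^ Suc k"
      using z(2) by (intro power_decreasing) auto
    then show "absv (e n * z ^ n) \<le> K * absv z ^ Suc k"
      using K by (simp add: absv_mult absv_power mult_mono)
  qed (use K(1) in simp)
  moreover have "(\<Sum>n<Suc k. e n * z ^ n) = e k * z ^ k"
    using k(2) by simp
  ultimately have "absv (e k) * absv z ^ k \<le> (K * absv z) * absv z ^ k"
    by (simp add: absv_mult absv_power mult_ac)
  then have "absv (e k) \<le> K * absv z"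
    using z(1) by simp
  moreover have "K * absv z < absv (e k)"
    using z(2) K(1) by (simp add: less_divide_eq mult.commute)
  ultimately show False
    by simp
qed

lemma entire_coeffs_unique:
  assumes "entire_coeffs absv c g" "entire_coeffs absv c' g"
  shows "c = c'"
proof -
  have "entire_coeffs absv (\<lambda>k. c k - c' k) (\<lambda>_. 0)"
    using entire_coeffs_diff[OF assms] by simp
  from entire_coeffs_zero_fun[OF this] show ?thesis
    by (simp add: fun_eq_iff)
qed

lemma mu_eq_Sup:
  assumes "entire_coeffs absv c g"
  shows "mu absv g r = Sup (range (\<lambda>n. absv (c n) * r ^ n))"
proof -
  have "(THE c. entire_coeffs absv c g) = c"
    using assms entire_coeffs_unique by blast
  then show ?thesis
    by (simp add: mu_def)
qed

lemma coeff_le_mu: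
  assumes "entire_coeffs absv c g" "0 < r"
  shows "absv (c n) * r ^ n \<le> mu absv g r"
proof -
  have "(\<lambda>n. absv (c n) * r ^ n) \<longlonglongrightarrow> 0"
    using assms by (simp add: entire_coeffs_def)
  then have "bdd_above (range (\<lambda>n. absv (c n) * r ^ n))"
    by (intro Bseq_bdd_above convergent_imp_Bseq convergentI)
  then show ?thesis
    using mu_eq_Sup[OF assms(1)] by (simp add: cSup_upper)
qed

lemma mu_le_if_coeff_bounded:
  assumes "coeff_bounded absv r B g"
  shows "mu absv g r \<le> B"
proof -
  obtain c where "entire_coeffs absv c g" "\<And>n. absv (c n) * r ^ n \<le> B"
    using assms by (auto simp: coeff_bounded_def)
  then show ?thesis
    by (auto simp: mu_eq_Sup intro!: cSup_least)
qed

lemma mu_pos: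
  assumes "entire_coeffs absv c g" "g \<noteq> (\<lambda>_. 0)" "0 < r"
  shows "0 < mu absv g r"
proof -
  obtain n where "c n \<noteq> 0"
    using entire_coeffs_nonzero[OF assms(1,2)] by blast
  then have "0 < absv (c n) * r ^ n"
    using assms(3) by simp
  also have "\<dots> \<le> mu absv g r"
    using coeff_le_mu[OF assms(1,3)] .
  finally show ?thesis .
qed

lemma m_quot_eq_0_if_coeff_bounded:
  assumes "is_entire absv f" "f \<noteq> (\<lambda>_. 0)" "0 < r" "coeff_bounded absv r (mu absv f r) h"
  shows "m_quot absv r h f = 0"
proof -
  obtain c d where c: "entire_coeffs absv c f" and d: "entire_coeffs absv d h"
    using assms(1,4) by (auto simp: is_entire_def coeff_bounded_def)
  have "0 < mu absv f r"
    using mu_pos[OF c assms(2,3)] .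
  moreover have "0 \<le> mu absv h r"
    using order_trans[OF _ coeff_le_mu[OF d assms(3), of 0]] by simp
  moreover have "mu absv h r \<le> mu absv f r"
    using mu_le_if_coeff_bounded[OF assms(4)] .
  \<comment> \<open>if \<open>\<mu>(r, h) = 0\<close>, Isabelle's \<open>ln 0 = 0\<close> agrees with \<open>log\<^sup>+ 0 = 0\<close>\<close>
  ultimately have "ln (mu absv h r / mu absv f r) \<le> 0"
    by (cases "mu absv h r = 0") simp_all
  then show ?thesis
    by (simp add: m_quot_def)
qed

end

locale nonarch_field = complete_nonarch + nontrivial_nonarch

theorem corollary2p2:
  fixes absv :: "'a::field_char_0 \<Rightarrow> real" and a b :: 'a
    and f :: "'a \<Rightarrow> 'a" and m :: nat and r :: real
  assumes "ac_complete_nonarch_field absv"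
    and "a \<noteq> 0" and "absv a \<le> 1"
    and "is_entire absv f" and "f \<noteq> (\<lambda>_. 0)"
    and "m > 0"
    and "r > absv b / absv a"
  shows "m_quot absv r (f \<circ> (\<lambda>z. a * z + b)) f = 0
       \<and> m_quot absv r (Delta_pow (\<lambda>z. a * z + b) m f) f = 0"
proof -
  interpret nonarch_field absv
    using assms(1) unfolding ac_complete_nonarch_field_def by unfold_locales auto
  have "0 < absv a"
    using assms(2) by simp
  have "0 \<le> absv b / absv a"
    by simp
  with assms(7) have "0 < r"
    by linarith
  have "absv b < r * absv a"
    using assms(7) \<open>0 < absv a\<close> by (simp add: divide_less_eq)
  also have "\<dots> \<le> r"
    using assms(3) \<open>0 < r\<close> by (simp add: mult_left_le)
  finally have "absv b \<le> r"
    by simp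
  obtain c where "entire_coeffs absv c f"
    using assms(4) by (auto simp: is_entire_def)
  then have "coeff_bounded absv r (mu absv f r) f"
    using coeff_le_mu \<open>0 < r\<close> by (auto simp: coeff_bounded_def)
  then show ?thesis
    using assms(3-5) \<open>0 < r\<close> \<open>absv b \<le> r\<close>
    by (simp add: m_quot_eq_0_if_coeff_bounded coeff_bounded_comp_affine coeff_bounded_Delta_pow)
qed

end
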